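(* Let $\alpha\in(0,1)$, $R>0$, and let $V(\lambda)$ be the maximal Phase-II observation time when at the contact time $t_2$ the target is on the boundary of the observation disk with relative bearing $\lambda\in[-\pi,\pi]$. Then the maximum possible observation time is $\max_{\lambda\in[-\pi,\pi]}V(\lambda)=\frac{2R}{1-\alpha}$.
   Context: Target: position $(0,y_T(t))$, $\dot y_T=1$. Observer: position $(x_O(t),y_O(t))$, $\dot x_O=\alpha\cos\psi(t)$, $\dot y_O=\alpha\sin\psi(t)$, heading $\psi$ a measurable control. Contact with bearing $\lambda$ at time $t_2$ means $\big(x_O(t_2),y_O(t_2)-y_T(t_2)\big)=R(\sin\lambda,\cos\lambda)$. For a control on $[t_2,\infty)$, $t_f=\inf\{t\ge t_2: x_O(t)^2+(y_O(t)-y_T(t))^2>R^2\}$ and the observation time is $t_f-t_2$; $V(\lambda)$ is the supremum of $t_f-t_2$ over all controls. *)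

theory Defs
  imports "HOL-Analysis.Analysis"
begin

text \<open>Target: position (0, yT t) with yT t = yT2 + (t - t2) (unit speed along the y-axis,
  yT2 being the target ordinate at the contact time t2).\<close>

definition target_y :: "real \<Rightarrow> real \<Rightarrow> real \<Rightarrow> real" where
  "target_y t2 yT2 t = yT2 + (t - t2)"

definition obs_x :: "real \<Rightarrow> real \<Rightarrow> real \<Rightarrow> real \<Rightarrow> (real \<Rightarrow> real) \<Rightarrow> real \<Rightarrow> real" where
  "obs_x alpha R lam t2 psi t = R * sin lam + integral {t2..t} (\<lambda>s. alpha * cos (psi s))"

definition obs_y :: "real \<Rightarrow> real \<Rightarrow> real \<Rightarrow> real \<Rightarrow> real \<Rightarrow> (real \<Rightarrow> real) \<Rightarrow> real \<Rightarrow> real" where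
  "obs_y alpha R lam t2 yT2 psi t = yT2 + R * cos lam + integral {t2..t} (\<lambda>s. alpha * sin (psi s))"

text \<open>Exit time t_f = inf of times t \<ge> t2 at which the target is strictly outside the
  observation disk of radius R; taken in the extended reals (inf of empty set = \<infinity>).\<close>
definition exit_time ::
  "real \<Rightarrow> real \<Rightarrow> real \<Rightarrow> real \<Rightarrow> real \<Rightarrow> (real \<Rightarrow> real) \<Rightarrow> ereal" where
  "exit_time alpha R lam t2 yT2 psi =
     Inf (ereal ` {t. t \<ge> t2 \<and>
        (obs_x alpha R lam t2 psi t)\<^sup>2 + (obs_y alpha R lam t2 yT2 psi t - target_y t2 yT2 t)\<^sup>2 > R\<^sup>2})"

definition V :: "real \<Rightarrow> real \<Rightarrow> real \<Rightarrow> real \<Rightarrow> real \<Rightarrow> ereal" where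
  "V alpha R t2 yT2 lam =
     (SUP psi \<in> borel_measurable lborel. exit_time alpha R lam t2 yT2 psi - ereal t2)"

end

theory Submission
  imports Defs
begin

text \<open>The observer's velocity has vertical component at most \<open>alpha < 1\<close>, so the vertical
  offset between observer and target decreases at rate at least \<open>1 - alpha\<close>. Starting from at
  most \<open>R\<close>, it drops below \<open>-R\<close> once more than \<open>2R/(1 - alpha)\<close> has elapsed, whatever the
  bearing and the control. The bound is attained by an observer that makes contact dead ahead
  of the target (\<open>lam = 0\<close>) and then heads straight along the target's course.\<close>

lemma integral_le_const_mult_length:
  fixes f :: "real \<Rightarrow> real"
  assumes "a \<le> b" and "0 \<le> c" and "\<And>x. x \<in> {a..b} \<Longrightarrow> f x \<le> c"
  shows "integral {a..b} f \<le> c * (b - a)"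
proof (cases "f integrable_on {a..b}")
  case True
  then have "integral {a..b} f \<le> integral {a..b} (\<lambda>_. c)"
    by (rule integral_le) (use assms in auto)
  with assms(1) show ?thesis
    by (simp add: mult.commute)
next
  case False
  with assms(1,2) show ?thesis
    by (simp add: not_integrable_integral)
qed

lemma Inf_ereal_greaterThan: "Inf (ereal ` {c<..}) = ereal c"
  using ereal_Inf'[of "{c<..}"] by auto

lemma obs_y_minus_target_y_le:
  assumes "t2 \<le> t" and "0 \<le> alpha" and "0 \<le> R"
  shows "obs_y alpha R lam t2 yT2 psi t - target_y t2 yT2 t \<le> R - (1 - alpha) * (t - t2)"
proof -
  have "integral {t2..t} (\<lambda>s. alpha * sin (psi s)) \<le> alpha * (t - t2)"
    using assms(1,2) by (intro integral_le_const_mult_length) (auto simp: mult_left_le)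
  moreover have "R * cos lam \<le> R"
    using assms(3) by (simp add: mult_left_le)
  ultimately show ?thesis
    unfolding obs_y_def target_y_def by (simp add: algebra_simps)
qed

lemma exit_time_le:
  assumes "0 \<le> alpha" and "alpha < 1" and "0 \<le> R"
  shows "exit_time alpha R lam t2 yT2 psi \<le> ereal (t2 + 2 * R / (1 - alpha))"
proof -
  define c where "c = t2 + 2 * R / (1 - alpha)"
  have "t2 \<le> t \<and> R\<^sup>2 < (obs_x alpha R lam t2 psi t)\<^sup>2
          + (obs_y alpha R lam t2 yT2 psi t - target_y t2 yT2 t)\<^sup>2" if "c < t" for t
  proof -
    have "t2 \<le> c" using assms by (simp add: c_def)
    with that have "t2 \<le> t" by simp
    have "2 * R < (1 - alpha) * (t - t2)"
      using that assms(2) by (simp add: c_def field_simps)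
    with obs_y_minus_target_y_le[OF \<open>t2 \<le> t\<close> assms(1,3), of lam yT2 psi]
    have "obs_y alpha R lam t2 yT2 psi t - target_y t2 yT2 t < - R"
      by linarith
    then have "R\<^sup>2 < (obs_y alpha R lam t2 yT2 psi t - target_y t2 yT2 t)\<^sup>2"
      using assms(3) by (smt (verit) power2_minus power_strict_mono zero_less_numeral)
    with \<open>t2 \<le> t\<close> show ?thesis
      by (smt (verit) zero_le_power2)
  qed
  then have "Inf (ereal ` {t. t2 \<le> t \<and> R\<^sup>2 < (obs_x alpha R lam t2 psi t)\<^sup>2
               + (obs_y alpha R lam t2 yT2 psi t - target_y t2 yT2 t)\<^sup>2}) \<le> Inf (ereal ` {c<..})"
    by (intro Inf_superset_mono image_mono) auto
  then show ?thesis
    unfolding exit_time_def Inf_ereal_greaterThan c_def by simp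
qed

lemma exit_time_straight_ahead:
  assumes "0 \<le> alpha" and "alpha < 1" and "0 \<le> R"
  shows "exit_time alpha R 0 t2 yT2 (\<lambda>_. pi / 2) = ereal (t2 + 2 * R / (1 - alpha))"
proof -
  have "(t2 \<le> t \<and> R\<^sup>2 < (obs_x alpha R 0 t2 (\<lambda>_. pi / 2) t)\<^sup>2
          + (obs_y alpha R 0 t2 yT2 (\<lambda>_. pi / 2) t - target_y t2 yT2 t)\<^sup>2)
        \<longleftrightarrow> t2 + 2 * R / (1 - alpha) < t" for t
  proof (cases "t2 \<le> t")
    case True
    define s where "s = (1 - alpha) * (t - t2)"
    have "0 \<le> s" using True assms(2) by (simp add: s_def)
    have "obs_x alpha R 0 t2 (\<lambda>_. pi / 2) t = 0"
      by (simp add: obs_x_def)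
    moreover have "obs_y alpha R 0 t2 yT2 (\<lambda>_. pi / 2) t - target_y t2 yT2 t = R - s"
      using True by (simp add: obs_y_def target_y_def s_def algebra_simps)
    moreover have "R\<^sup>2 < (R - s)\<^sup>2 \<longleftrightarrow> 2 * R < s"
    proof -
      have "R\<^sup>2 < (R - s)\<^sup>2 \<longleftrightarrow> 0 < s * (s - 2 * R)"
        by (simp add: power2_eq_square algebra_simps)
      also have "\<dots> \<longleftrightarrow> 2 * R < s"
        using \<open>0 \<le> s\<close> assms(3) by (smt (verit) mult_nonneg_nonpos mult_pos_pos)
      finally show ?thesis .
    qed
    moreover have "2 * R < s \<longleftrightarrow> t2 + 2 * R / (1 - alpha) < t"
      using assms(2) by (simp add: s_def field_simps)
    ultimately show ?thesis
      using True by simp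
  next
    case False
    moreover have "0 \<le> 2 * R / (1 - alpha)"
      using assms by simp
    ultimately show ?thesis
      by simp
  qed
  then have "{t. t2 \<le> t \<and> R\<^sup>2 < (obs_x alpha R 0 t2 (\<lambda>_. pi / 2) t)\<^sup>2
          + (obs_y alpha R 0 t2 yT2 (\<lambda>_. pi / 2) t - target_y t2 yT2 t)\<^sup>2}
        = {t2 + 2 * R / (1 - alpha)<..}"
    by auto
  then show ?thesis
    unfolding exit_time_def by (simp add: Inf_ereal_greaterThan)
qed

theorem lemma5:
  fixes alpha R t2 yT2 :: real
  assumes "0 < alpha" and "alpha < 1" and "0 < R"
  shows "(\<forall>lam\<in>{-pi..pi}. V alpha R t2 yT2 lam \<le> ereal (2 * R / (1 - alpha)))
       \<and> (\<exists>lam\<in>{-pi..pi}. V alpha R t2 yT2 lam = ereal (2 * R / (1 - alpha)))"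
proof -
  from assms have bounds: "0 \<le> alpha" "alpha < 1" "0 \<le> R"
    by simp_all
  have upper: "V alpha R t2 yT2 lam \<le> ereal (2 * R / (1 - alpha))" for lam
    unfolding V_def
  proof (rule SUP_least)
    fix psi :: "real \<Rightarrow> real"
    show "exit_time alpha R lam t2 yT2 psi - ereal t2 \<le> ereal (2 * R / (1 - alpha))"
      using exit_time_le[OF bounds, of lam t2 yT2 psi]
      by (cases "exit_time alpha R lam t2 yT2 psi") auto
  qed
  have "ereal (2 * R / (1 - alpha)) \<le> V alpha R t2 yT2 0"
    unfolding V_def
    by (rule SUP_upper2[of "\<lambda>_. pi / 2"]) (simp_all add: exit_time_straight_ahead[OF bounds])
  with upper[of 0] have "V alpha R t2 yT2 0 = ereal (2 * R / (1 - alpha))"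
    by simp
  then show ?thesis
    using upper by force
qed

end
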